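(* Let $f\colon\mathbb{R}\to\mathbb{R}$ have the Baire property, let $I$ be an open interval and let $\varepsilon\ge 0$. The following are equivalent: (i) $f$ satisfies the condition $S(I,A,\varepsilon)$ for every residual set $A\subset\mathbb{R}$; (ii) $f$ satisfies $S(I,A,\varepsilon)$ for every residual set $A\subset\mathbb{R}$ such that $f\restriction A$ is continuous; (iii) there exists a residual set $A\subset\mathbb{R}$ such that $f\restriction A$ is continuous and $f$ satisfies $S(I,A,\varepsilon)$.
   Context: For $a,b\in\mathbb{R}$, $I(a,b)$ denotes the open interval with end-points $a$ and $b$. For $A\subset\mathbb{R}$, an interval $J\subset\mathbb{R}$ and $\varepsilon\ge0$, a function $f\colon\mathbb{R}\to\mathbb{R}$ satisfies the condition $S(J,A,\varepsilon)$ if for all $a,b\in J$ with $f(a)<f(b)$ there exists $x\in A\cap I(a,b)$ with $f(x)\in(f(a)-\varepsilon,f(b)+\varepsilon)$. A function has the Baire property if preimages of open sets have the Baire property; a set is residual if its complement is meager. *)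

theory Defs
  imports "HOL-Analysis.Analysis"
begin

definition nowhere_dense :: "real set \<Rightarrow> bool" where
  "nowhere_dense S \<longleftrightarrow> interior (closure S) = {}"

definition meager :: "real set \<Rightarrow> bool" where
  "meager S \<longleftrightarrow> (\<exists>F :: nat \<Rightarrow> real set. (\<forall>n. nowhere_dense (F n)) \<and> S \<subseteq> (\<Union>n. F n))"

definition residual :: "real set \<Rightarrow> bool" where
  "residual A \<longleftrightarrow> meager (- A)"

definition has_baire_property_set :: "real set \<Rightarrow> bool" where
  "has_baire_property_set S \<longleftrightarrow> (\<exists>U. open U \<and> meager ((S - U) \<union> (U - S)))"

definition has_baire_property :: "(real \<Rightarrow> real) \<Rightarrow> bool" where
  "has_baire_property f \<longleftrightarrow> (\<forall>U. open U \<longrightarrow> has_baire_property_set (f -` U))"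

definition oint :: "real \<Rightarrow> real \<Rightarrow> real set" where
  "oint a b = {min a b<..<max a b}"

definition cond_S :: "(real \<Rightarrow> real) \<Rightarrow> real set \<Rightarrow> real set \<Rightarrow> real \<Rightarrow> bool" where
  "cond_S f J A \<epsilon> \<longleftrightarrow> (\<forall>a\<in>J. \<forall>b\<in>J. f a < f b \<longrightarrow>
      (\<exists>x \<in> A \<inter> oint a b. f x \<in> {f a - \<epsilon> <..< f b + \<epsilon>}))"

end

theory Submission
  imports Defs
begin

text \<open>
  A function with the Baire property is continuous on some residual set \<open>A\<^sub>0\<close>.
  If \<open>x \<in> A\<^sub>0\<close> witnesses the condition \<open>S\<close> for \<open>a, b\<close>, continuity of \<open>f\<close> on \<open>A\<^sub>0\<close> gives an
  open \<open>W \<ni> x\<close> inside \<open>I(a,b)\<close> on which every point of \<open>A\<^sub>0\<close> is again a witness.  For any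
  other residual set \<open>A\<close>, the residual set \<open>A \<inter> A\<^sub>0\<close> is dense by the Baire category
  theorem, so it meets \<open>W\<close>; hence the condition \<open>S\<close> on one residual set of continuity
  passes to every residual set, which gives all three equivalences at once.
\<close>

lemma meager_UN:
  assumes "\<And>n::nat. meager (M n)"
  shows "meager (\<Union>n. M n)"
proof -
  have "\<forall>n. \<exists>F. (\<forall>m::nat. nowhere_dense (F m)) \<and> M n \<subseteq> (\<Union>m. F m)"
    using assms unfolding meager_def by blast
  then obtain F :: "nat \<Rightarrow> nat \<Rightarrow> real set"
    where F: "\<forall>n. (\<forall>m. nowhere_dense (F n m)) \<and> M n \<subseteq> (\<Union>m. F n m)"
    by (rule choice[THEN exE])
  have "(\<Union>n. M n) \<subseteq> (\<Union>k. case_prod F (prod_decode k))"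
  proof
    fix x assume "x \<in> (\<Union>n. M n)"
    then obtain n m where "x \<in> F n m" using F by blast
    then have "x \<in> case_prod F (prod_decode (prod_encode (n, m)))" by simp
    then show "x \<in> (\<Union>k. case_prod F (prod_decode k))" by (rule UN_I[OF UNIV_I])
  qed
  moreover have "nowhere_dense (case_prod F (prod_decode k))" for k
    using F by (simp add: split_beta)
  ultimately show ?thesis
    unfolding meager_def by (intro exI[of _ "\<lambda>k. case_prod F (prod_decode k)"]) blast
qed

lemma meager_Un:
  assumes "meager M" "meager N"
  shows "meager (M \<union> N)"
proof -
  have "M \<union> N = (\<Union>n::nat. if n = 0 then M else N)"
    by (auto split: if_splits)
  then show ?thesis using assms meager_UN[of "\<lambda>n. if n = 0 then M else N"] by simp
qed

lemma residual_Int: "residual A \<Longrightarrow> residual B \<Longrightarrow> residual (A \<inter> B)"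
  by (simp add: residual_def meager_Un)

lemma residual_closure_eq_UNIV:
  assumes "residual A"
  shows "closure A = UNIV"
proof -
  obtain F :: "nat \<Rightarrow> real set"
    where F: "\<And>n. nowhere_dense (F n)" "- A \<subseteq> (\<Union>n. F n)"
    using assms unfolding residual_def meager_def by blast
  let ?G = "range (\<lambda>n. - closure (F n))"
  have "UNIV \<subseteq> closure (\<Inter>?G)"
  proof (rule Baire)
    fix T assume "T \<in> ?G"
    then obtain n where T: "T = - closure (F n)" by blast
    have "closure T = UNIV"
      using F(1)[of n] by (simp add: T closure_complement nowhere_dense_def)
    then show "openin (top_of_set UNIV) T \<and> UNIV \<subseteq> closure T"
      by (simp add: T open_Compl)
  qed auto
  moreover have "\<Inter>?G \<subseteq> A"
    using F(2) closure_subset by blast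
  ultimately show ?thesis
    using closure_mono by blast
qed

lemma residual_Int_open_nonempty:
  assumes "residual A" "open U" "U \<noteq> {}"
  shows "A \<inter> U \<noteq> {}"
  using assms open_Int_closure_eq_empty[of U A] residual_closure_eq_UNIV[of A]
  by (auto simp: Int_commute)

lemma has_baire_property_continuous_on_residual:
  assumes "has_baire_property f"
  obtains A where "residual A" "continuous_on A f"
proof -
  obtain B :: "nat \<Rightarrow> real set" where B: "\<And>n. open (B n)"
    "\<And>S. open S \<Longrightarrow> \<exists>k. S = \<Union>{B n |n. n \<in> k}"
    by (rule univ_second_countable_sequence) blast
  have "\<forall>n. \<exists>U. open U \<and> meager ((f -` B n - U) \<union> (U - f -` B n))"
    using assms B(1) unfolding has_baire_property_def has_baire_property_set_def by blast
  then obtain G where G: "\<And>n. open (G n)" "\<And>n. meager ((f -` B n - G n) \<union> (G n - f -` B n))"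
    by metis
  define A where "A = - (\<Union>n. (f -` B n - G n) \<union> (G n - f -` B n))"
  have "residual A" unfolding residual_def A_def double_compl
    by (rule meager_UN) (rule G(2))
  moreover have "continuous_on A f"
    unfolding continuous_on_open_invariant
  proof (intro allI impI)
    fix V :: "real set" assume "open V"
    then obtain k where k: "V = \<Union>{B n |n. n \<in> k}" using B(2) by blast
    have "\<And>x n. x \<in> A \<Longrightarrow> x \<in> G n \<longleftrightarrow> f x \<in> B n" by (auto simp: A_def)
    then have "(\<Union>n\<in>k. G n) \<inter> A = f -` V \<inter> A" by (auto simp: k)
    moreover have "open (\<Union>n\<in>k. G n)" using G(1) by auto
    ultimately show "\<exists>W. open W \<and> W \<inter> A = f -` V \<inter> A" by blast
  qed
  ultimately show ?thesis by (rule that)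
qed

lemma cond_S_residual_of_continuous_on:
  assumes "residual A\<^sub>0" "continuous_on A\<^sub>0 f" "cond_S f J A\<^sub>0 \<epsilon>" "residual A"
  shows "cond_S f J A \<epsilon>"
  unfolding cond_S_def
proof (intro ballI impI)
  fix a b assume "a \<in> J" "b \<in> J" "f a < f b"
  let ?V = "{f a - \<epsilon> <..< f b + \<epsilon>}"
  obtain x where x: "x \<in> A\<^sub>0" "x \<in> oint a b" "f x \<in> ?V"
    using assms(3) \<open>a \<in> J\<close> \<open>b \<in> J\<close> \<open>f a < f b\<close> unfolding cond_S_def by blast
  obtain W where W: "open W" "W \<inter> A\<^sub>0 = f -` ?V \<inter> A\<^sub>0"
    using assms(2) unfolding continuous_on_open_invariant by (meson open_greaterThanLessThan)
  have "open (W \<inter> oint a b)" "x \<in> W \<inter> oint a b"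
    using W x by (auto simp: oint_def)
  then obtain y where "y \<in> A \<inter> A\<^sub>0" "y \<in> W \<inter> oint a b"
    using residual_Int_open_nonempty[OF residual_Int[OF assms(4,1)]] by blast
  then show "\<exists>y \<in> A \<inter> oint a b. f y \<in> ?V"
    using W by blast
qed

theorem lemma2:
  fixes f :: "real \<Rightarrow> real" and I :: "real set" and \<epsilon> :: real
  assumes "has_baire_property f"
    and "open I" and "is_interval I"
    and "\<epsilon> \<ge> 0"
  shows "((\<forall>A. residual A \<longrightarrow> cond_S f I A \<epsilon>)
          \<longleftrightarrow> (\<forall>A. residual A \<and> continuous_on A f \<longrightarrow> cond_S f I A \<epsilon>))
       \<and> ((\<forall>A. residual A \<and> continuous_on A f \<longrightarrow> cond_S f I A \<epsilon>)
          \<longleftrightarrow> (\<exists>A. residual A \<and> continuous_on A f \<and> cond_S f I A \<epsilon>))"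
proof -
  obtain A\<^sub>0 where "residual A\<^sub>0" "continuous_on A\<^sub>0 f"
    using has_baire_property_continuous_on_residual[OF assms(1)] .
  then show ?thesis
    using cond_S_residual_of_continuous_on[of _ f I \<epsilon>] by blast
qed

end
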